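(* Every Halin graph is $(3,1)$-choosable.
   Context: A Halin graph is a planar graph constructed from a planar drawing of a tree with at least four vertices and no vertices of degree two by connecting its leaves by a cycle that crosses none of its edges. A $(k,d)$-list assignment for a graph $G$ assigns to each vertex $v$ a list $L(v)$ of at least $k$ colors such that $|L(x)\cap L(y)|\le d$ whenever $x$ and $y$ are adjacent; $G$ is $(k,d)$-choosable if for every $(k,d)$-list assignment $L$ there is a proper vertex coloring $\varphi$ with $\varphi(v)\in L(v)$ for all $v$. *)

theory Defs
  imports Main
begin

definition simple_graph :: "'a set \<Rightarrow> 'a set set \<Rightarrow> bool" where
  "simple_graph V E \<longleftrightarrow> finite V \<and>
     (\<forall>e\<in>E. \<exists>u v. u \<noteq> v \<and> e = {u, v} \<and> u \<in> V \<and> v \<in> V)"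

definition adjacent :: "'a set set \<Rightarrow> 'a \<Rightarrow> 'a \<Rightarrow> bool" where
  "adjacent E x y \<longleftrightarrow> {x, y} \<in> E"

definition degree :: "'a set set \<Rightarrow> 'a \<Rightarrow> nat" where
  "degree E v = card {e \<in> E. v \<in> e}"

definition reach :: "'a set set \<Rightarrow> 'a \<Rightarrow> 'a \<Rightarrow> bool" where
  "reach E = (adjacent E)\<^sup>*\<^sup>*"

definition is_tree :: "'a set \<Rightarrow> 'a set set \<Rightarrow> bool" where
  "is_tree V T \<longleftrightarrow> simple_graph V T \<and> V \<noteq> {} \<and>
     (\<forall>u\<in>V. \<forall>v\<in>V. reach T u v) \<and>
     (\<forall>e\<in>T. \<forall>u v. e = {u, v} \<longrightarrow> \<not> reach (T - {e}) u v)"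

definition leaves :: "'a set \<Rightarrow> 'a set set \<Rightarrow> 'a set" where
  "leaves V T = {v \<in> V. degree T v = 1}"

text \<open>That the cycle can be drawn without crossing a planar drawing of the tree is
expressed combinatorially: for every tree edge {u,v}, the leaves on u's side of
T - {u,v} form a contiguous arc of the cyclic leaf order.\<close>
definition halin_graph :: "'a set \<Rightarrow> 'a set set \<Rightarrow> bool" where
  "halin_graph V E \<longleftrightarrow>
     (\<exists>T c k. is_tree V T \<and> card V \<ge> 4 \<and> (\<forall>v\<in>V. degree T v \<noteq> 2) \<and>
        k = card (leaves V T) \<and> k \<ge> 3 \<and>
        bij_betw c {..<k} (leaves V T) \<and>
        E = T \<union> {{c i, c (Suc i mod k)} | i. i < k} \<and>
        (\<forall>e\<in>T. \<forall>u v. e = {u, v} \<longrightarrow>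
           (\<exists>a l. {x \<in> leaves V T. reach (T - {e}) u x} =
                  (\<lambda>j. c ((a + j) mod k)) ` {..<l})))"

definition kd_list_assignment ::
  "nat \<Rightarrow> nat \<Rightarrow> 'a set \<Rightarrow> 'a set set \<Rightarrow> ('a \<Rightarrow> 'c set) \<Rightarrow> bool" where
  "kd_list_assignment k d V E L \<longleftrightarrow>
     (\<forall>v\<in>V. finite (L v) \<and> card (L v) \<ge> k) \<and>
     (\<forall>x\<in>V. \<forall>y\<in>V. adjacent E x y \<longrightarrow> card (L x \<inter> L y) \<le> d)"

definition proper_L_coloring ::
  "'a set \<Rightarrow> 'a set set \<Rightarrow> ('a \<Rightarrow> 'c set) \<Rightarrow> ('a \<Rightarrow> 'c) \<Rightarrow> bool" where
  "proper_L_coloring V E L \<phi> \<longleftrightarrow>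
     (\<forall>v\<in>V. \<phi> v \<in> L v) \<and> (\<forall>x\<in>V. \<forall>y\<in>V. adjacent E x y \<longrightarrow> \<phi> x \<noteq> \<phi> y)"

definition kd_choosable ::
  "nat \<Rightarrow> nat \<Rightarrow> 'a set \<Rightarrow> 'a set set \<Rightarrow> 'c itself \<Rightarrow> bool" where
  "kd_choosable k d V E (_ :: 'c itself) \<longleftrightarrow>
     (\<forall>L :: 'a \<Rightarrow> 'c set. kd_list_assignment k d V E L \<longrightarrow>
        (\<exists>\<phi>. proper_L_coloring V E L \<phi>))"

end

theory Submission
  imports Defs
begin

text \<open>
  The interior vertices are colored first. The tree restricted to them is a forest, hence
  1-degenerate, so greedy coloring works from lists of size 2. Every leaf has a single
  tree neighbor; deleting that neighbor's color from the leaf's list leaves at least two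
  colors, and adjacent leaves still share at most one of them. The leaves form a cycle, and a
  cycle is (2,1)-choosable: give the first leaf a color outside the list of the last one
  (possible since the two lists share at most one color), then color greedily around.
\<close>

lemma card_less_imp_ex_notin:
  assumes "finite B" "card B < card A"
  shows "\<exists>x\<in>A. x \<notin> B"
  using assms by (metis card_mono not_less subsetI)

lemma adjacent_sym: "adjacent E x y \<Longrightarrow> adjacent E y x"
  by (simp add: adjacent_def insert_commute)

lemma reach_closed:
  assumes "reach F x y" "x \<in> C" "\<And>w z. w \<in> C \<Longrightarrow> adjacent F w z \<Longrightarrow> z \<in> C"
  shows "y \<in> C"
  using assms(1,2) unfolding reach_def by (induction rule: rtranclp_induct) (auto intro: assms(3))

lemma successively_adjacent_reach:
  "successively (adjacent F) xs \<Longrightarrow> x \<in> set xs \<Longrightarrow> reach F (hd xs) x"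
proof (induction xs)
  case Nil
  then show ?case by simp
next
  case (Cons a xs)
  show ?case
  proof (cases "x = a")
    case True
    then show ?thesis by (simp add: reach_def)
  next
    case False
    with Cons.prems have "adjacent F a (hd xs)" "reach F (hd xs) x"
      by (auto simp: successively_Cons intro: Cons.IH)
    then show ?thesis unfolding reach_def by (simp add: converse_rtranclp_into_rtranclp)
  qed
qed

lemma kd_choosable_cong:
  assumes "\<And>x y. x \<in> V \<Longrightarrow> y \<in> V \<Longrightarrow> adjacent E x y \<longleftrightarrow> adjacent F x y"
  shows "kd_choosable k d V E TYPE('c) \<longleftrightarrow> kd_choosable k d V F TYPE('c)"
proof -
  have "kd_list_assignment k d V E = (kd_list_assignment k d V F :: ('a \<Rightarrow> 'c set) \<Rightarrow> bool)"
    using assms unfolding kd_list_assignment_def by (intro ext) auto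
  moreover have "proper_L_coloring V E = (proper_L_coloring V F :: ('a \<Rightarrow> 'c set) \<Rightarrow> _)"
    using assms unfolding proper_L_coloring_def by (intro ext) auto
  ultimately show ?thesis unfolding kd_choosable_def by simp
qed

lemma kd_list_assignment_remove_colors:
  assumes L: "kd_list_assignment (k + m) d V E L" and "U \<subseteq> V"
    and R: "\<And>x. x \<in> U \<Longrightarrow> finite (R x) \<and> card (R x) \<le> m"
  shows "kd_list_assignment k d U E (\<lambda>x. L x - R x)"
  unfolding kd_list_assignment_def
proof (intro conjI ballI impI)
  fix x assume "x \<in> U"
  then have "finite (L x)" "k + m \<le> card (L x)" "finite (R x)" "card (R x) \<le> m"
    using L R \<open>U \<subseteq> V\<close> by (auto simp: kd_list_assignment_def)
  then show "finite (L x - R x)" "k \<le> card (L x - R x)"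
    using diff_card_le_card_Diff[of "R x" "L x"] by auto
next
  fix x y assume "x \<in> U" "y \<in> U" "adjacent E x y"
  then have "card (L x \<inter> L y) \<le> d" "finite (L x)"
    using L \<open>U \<subseteq> V\<close> by (auto simp: kd_list_assignment_def)
  moreover have "(L x - R x) \<inter> (L y - R y) \<subseteq> L x \<inter> L y" by blast
  ultimately show "card ((L x - R x) \<inter> (L y - R y)) \<le> d"
    by (meson card_mono finite_Int order_trans)
qed

definition degenerate :: "nat \<Rightarrow> 'a set \<Rightarrow> 'a set set \<Rightarrow> bool" where
  "degenerate g S E \<longleftrightarrow>
     (\<forall>S'\<subseteq>S. S' \<noteq> {} \<longrightarrow> (\<exists>w\<in>S'. card {y\<in>S'. adjacent E w y} \<le> g))"

lemma degenerate_subset: "degenerate g S E \<Longrightarrow> S' \<subseteq> S \<Longrightarrow> degenerate g S' E"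
  unfolding degenerate_def by (meson subset_trans)

lemma degenerate_mono:
  assumes "degenerate g S F" "finite S"
    and "\<And>x y. x \<in> S \<Longrightarrow> y \<in> S \<Longrightarrow> adjacent E x y \<Longrightarrow> adjacent F x y"
  shows "degenerate g S E"
  unfolding degenerate_def
proof (intro allI impI)
  fix S' assume S': "S' \<subseteq> S" "S' \<noteq> {}"
  then obtain w where w: "w \<in> S'" "card {y\<in>S'. adjacent F w y} \<le> g"
    using assms(1) unfolding degenerate_def by blast
  have "card {y\<in>S'. adjacent E w y} \<le> card {y\<in>S'. adjacent F w y}"
    using S' w(1) assms(2,3) by (intro card_mono) (auto intro: finite_subset)
  with w show "\<exists>w\<in>S'. card {y\<in>S'. adjacent E w y} \<le> g" by force
qed

lemma degenerate_proper_L_coloring: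
  assumes "finite S" "degenerate g S E" "\<forall>v\<in>S. \<not> adjacent E v v"
    and "\<And>v. v \<in> S \<Longrightarrow> g < card (L v)"
  shows "\<exists>\<phi>. proper_L_coloring S E L \<phi>"
  using assms
proof (induction S rule: finite_psubset_induct)
  case (psubset S)
  show ?case
  proof (cases "S = {}")
    case True
    then show ?thesis by (simp add: proper_L_coloring_def)
  next
    case False
    then obtain w where w: "w \<in> S" "card {y\<in>S. adjacent E w y} \<le> g"
      using psubset.prems(1) unfolding degenerate_def by blast
    have "S - {w} \<subset> S" using w(1) by blast
    moreover have "degenerate g (S - {w}) E"
      using psubset.prems(1) by (rule degenerate_subset) blast
    ultimately have "\<exists>\<phi>. proper_L_coloring (S - {w}) E L \<phi>"
      by (rule psubset.IH) (use psubset.prems in auto)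
    then obtain \<phi> where \<phi>: "proper_L_coloring (S - {w}) E L \<phi>" ..
    define N where "N = {y\<in>S - {w}. adjacent E w y}"
    have "finite N" using psubset.hyps by (simp add: N_def)
    moreover have "card (\<phi> ` N) < card (L w)"
    proof -
      have "card N \<le> card {y\<in>S. adjacent E w y}"
        using psubset.hyps by (intro card_mono) (auto simp: N_def)
      also have "\<dots> < card (L w)" using w psubset.prems(3) by fastforce
      finally show ?thesis using card_image_le[OF \<open>finite N\<close>, of \<phi>] by linarith
    qed
    ultimately obtain a where a: "a \<in> L w" "a \<notin> \<phi> ` N"
      using card_less_imp_ex_notin by blast
    have "proper_L_coloring S E L (\<phi>(w := a))"
      unfolding proper_L_coloring_def
    proof (intro conjI ballI impI)
      fix v assume "v \<in> S"
      then show "(\<phi>(w := a)) v \<in> L v" using \<phi> a by (auto simp: proper_L_coloring_def)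
    next
      fix x y assume xy: "x \<in> S" "y \<in> S" "adjacent E x y"
      then have "x \<noteq> y" using psubset.prems(2) by blast
      consider "x = w" | "y = w" | "x \<noteq> w" "y \<noteq> w" by blast
      then show "(\<phi>(w := a)) x \<noteq> (\<phi>(w := a)) y"
      proof cases
        case 1
        then have "y \<in> N" using xy \<open>x \<noteq> y\<close> by (auto simp: N_def)
        then show ?thesis using 1 \<open>x \<noteq> y\<close> a(2) by auto
      next
        case 2
        then have "x \<in> N" using xy \<open>x \<noteq> y\<close> adjacent_sym by (auto simp: N_def)
        then show ?thesis using 2 \<open>x \<noteq> y\<close> a(2) by auto
      next
        case 3
        then show ?thesis using \<phi> xy by (auto simp: proper_L_coloring_def)
      qed
    qed
    then show ?thesis by blast
  qed
qed

lemma kd_choosable_extend_degenerate: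
  assumes I: "I \<subseteq> V" "finite I" "degenerate g I E" "g < k + m" "\<forall>v\<in>I. \<not> adjacent E v v"
    and outer: "kd_choosable k d (V - I) E TYPE('c)"
    and few_inner: "\<And>x. x \<in> V - I \<Longrightarrow> card {u\<in>I. adjacent E x u} \<le> m"
  shows "kd_choosable (k + m) d V E TYPE('c)"
  unfolding kd_choosable_def
proof (intro allI impI)
  fix L :: "'a \<Rightarrow> 'c set"
  assume L: "kd_list_assignment (k + m) d V E L"
  then have "\<And>v. v \<in> V \<Longrightarrow> k + m \<le> card (L v)" by (simp add: kd_list_assignment_def)
  then have "\<exists>\<phi>. proper_L_coloring I E L \<phi>"
    using I(1,4) by (intro degenerate_proper_L_coloring[OF I(2,3,5)]) (meson less_le_trans subsetD)
  then obtain \<phi> where \<phi>: "proper_L_coloring I E L \<phi>" ..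
  define R where "R x = \<phi> ` {u\<in>I. adjacent E x u}" for x
  have "finite (R x) \<and> card (R x) \<le> m" if "x \<in> V - I" for x
    using card_image_le[of "{u\<in>I. adjacent E x u}" \<phi>] few_inner[OF that] I(2)
    by (simp add: R_def)
  then have "kd_list_assignment k d (V - I) E (\<lambda>x. L x - R x)"
    using L by (intro kd_list_assignment_remove_colors) auto
  then obtain \<psi> where \<psi>: "proper_L_coloring (V - I) E (\<lambda>x. L x - R x) \<psi>"
    using outer unfolding kd_choosable_def by blast
  have "proper_L_coloring V E L (\<lambda>x. if x \<in> I then \<phi> x else \<psi> x)"
    unfolding proper_L_coloring_def
  proof (intro conjI ballI impI)
    fix v assume "v \<in> V"
    then show "(if v \<in> I then \<phi> v else \<psi> v) \<in> L v"
      using \<phi> \<psi> by (auto simp: proper_L_coloring_def)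
  next
    fix x y assume xy: "x \<in> V" "y \<in> V" "adjacent E x y"
    have outer_inner: "\<psi> x \<noteq> \<phi> y" if "x \<in> V - I" "y \<in> I" "adjacent E x y" for x y
      using \<psi> that by (auto simp: proper_L_coloring_def R_def)
    show "(if x \<in> I then \<phi> x else \<psi> x) \<noteq> (if y \<in> I then \<phi> y else \<psi> y)"
      using \<phi> \<psi> xy outer_inner[of x y] outer_inner[of y x] adjacent_sym[OF xy(3)]
      by (auto simp: proper_L_coloring_def)
  qed
  then show "\<exists>\<phi>. proper_L_coloring V E L \<phi>" by blast
qed

definition forest :: "'a set set \<Rightarrow> bool" where
  "forest T \<longleftrightarrow> (\<forall>e\<in>T. \<forall>u v. e = {u, v} \<longrightarrow> \<not> reach (T - {e}) u v)"

lemma forest_not_adjacent_self: "forest T \<Longrightarrow> \<not> adjacent T v v"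
  unfolding forest_def adjacent_def reach_def by blast

lemma forest_path_neighbor_of_start:
  assumes T: "forest T"
    and path: "distinct (w # v # vs)" "successively (adjacent T) (w # v # vs)"
    and y: "adjacent T w y" "y \<in> set (v # vs)"
  shows "y = v"
proof (rule ccontr)
  assume "y \<noteq> v"
  have w_new: "w \<notin> set (v # vs)" and walk: "successively (adjacent T) (v # vs)"
    using path by (auto simp: successively_Cons)
  from walk have "successively (adjacent (T - {{w, y}})) (v # vs)"
  proof (rule successively_mono)
    fix a b assume "a \<in> set (v # vs)" "b \<in> set (v # vs)" "adjacent T a b"
    moreover from calculation(1,2) w_new have "w \<notin> {a, b}" by auto
    then have "{a, b} \<noteq> {w, y}" by auto
    ultimately show "adjacent (T - {{w, y}}) a b" by (simp add: adjacent_def)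
  qed
  then have "reach (T - {{w, y}}) v y"
    using successively_adjacent_reach y(2) by force
  moreover have "adjacent (T - {{w, y}}) w v"
  proof -
    have "adjacent T w v" using path(2) by simp
    moreover have "{w, v} \<noteq> {w, y}" using \<open>y \<noteq> v\<close> path(1) by auto
    ultimately show ?thesis by (simp add: adjacent_def)
  qed
  ultimately have "reach (T - {{w, y}}) w y"
    unfolding reach_def by (simp add: converse_rtranclp_into_rtranclp)
  then show False using T y(1) unfolding forest_def adjacent_def by blast
qed

lemma forest_ex_vertex_le_one_neighbor:
  assumes T: "forest T" and S: "finite S" "S \<noteq> {}"
  shows "\<exists>w\<in>S. card {y\<in>S. adjacent T w y} \<le> 1"
proof -
  define path where "path xs \<longleftrightarrow>
      xs \<noteq> [] \<and> distinct xs \<and> set xs \<subseteq> S \<and> successively (adjacent T) xs" for xs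
  have path_short: "length xs < Suc (card S)" if "path xs" for xs
    using that S(1) distinct_card card_mono unfolding path_def by (metis le_imp_less_Suc)
  obtain s where "s \<in> S" using S(2) by blast
  then have "path [s]" by (simp add: path_def)
  then obtain xs where xs: "path xs" and longest: "\<And>ys. path ys \<Longrightarrow> length ys \<le> length xs"
    using Lattices_Big.ex_has_greatest_nat[of path "[s]" length] path_short by blast
  define w where "w = hd xs"
  \<comment> \<open>the start of a longest path has no neighbors off the path\<close>
  have "y = hd (tl xs)" if y: "y \<in> S" "adjacent T w y" for y
  proof (cases "y \<in> set xs")
    case False
    then have "path (y # xs)"
      using xs y adjacent_sym by (auto simp: path_def successively_Cons w_def)
    then show ?thesis using longest[of "y # xs"] by simp
  next
    case True
    have "y \<noteq> w" using y(2) forest_not_adjacent_self[OF T] by blast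
    with True obtain v vs where xs_eq: "xs = w # v # vs" and "y \<in> set (v # vs)"
      using xs unfolding path_def w_def by (metis list.collapse list.set_cases set_ConsD)
    then show ?thesis
      using forest_path_neighbor_of_start[OF T, of w v vs y] xs y(2) by (simp add: path_def)
  qed
  then have "{y\<in>S. adjacent T w y} \<subseteq> {hd (tl xs)}" by blast
  then have "card {y\<in>S. adjacent T w y} \<le> card {hd (tl xs)}" by (intro card_mono) auto
  then have "card {y\<in>S. adjacent T w y} \<le> 1" by simp
  moreover have "w \<in> S" using xs unfolding path_def w_def by auto
  ultimately show ?thesis by blast
qed

lemma forest_degenerate: "forest T \<Longrightarrow> finite S \<Longrightarrow> degenerate 1 S T"
  unfolding degenerate_def by (metis forest_ex_vertex_le_one_neighbor finite_subset)

lemma ex_path_coloring: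
  assumes "a \<in> M 0" "\<And>j. j < n \<Longrightarrow> 2 \<le> card (M (Suc j))"
  shows "\<exists>f. f 0 = a \<and> (\<forall>j\<le>n. f j \<in> M j) \<and> (\<forall>j<n. f (Suc j) \<noteq> f j)"
  using assms(2)
proof (induction n)
  case 0
  show ?case using assms(1) by auto
next
  case (Suc n)
  then obtain f where f: "f 0 = a" "\<forall>j\<le>n. f j \<in> M j" "\<forall>j<n. f (Suc j) \<noteq> f j"
    by auto
  have "card {f n} < card (M (Suc n))" using Suc.prems[of n] by simp
  then obtain b where "b \<in> M (Suc n)" "b \<noteq> f n"
    using card_less_imp_ex_notin[of "{f n}"] by auto
  then have "(f(Suc n := b)) 0 = a \<and> (\<forall>j\<le>Suc n. (f(Suc n := b)) j \<in> M j) \<and>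
      (\<forall>j<Suc n. (f(Suc n := b)) (Suc j) \<noteq> (f(Suc n := b)) j)"
    using f by (auto simp: le_Suc_eq less_Suc_eq)
  then show ?case by blast
qed

lemma ex_cycle_coloring:
  assumes "\<And>i. i < k \<Longrightarrow> 2 \<le> card (M i)"
    and "\<And>i. i < k \<Longrightarrow> card (M i \<inter> M (Suc i mod k)) \<le> 1"
  shows "\<exists>f. \<forall>i<k. f i \<in> M i \<and> f i \<noteq> f (Suc i mod k)"
proof (cases "k = 0")
  case True
  then show ?thesis by simp
next
  case False
  then have "card (M (k - 1) \<inter> M 0) \<le> 1" using assms(2)[of "k - 1"] by simp
  moreover have "2 \<le> card (M 0)" using False assms(1) by simp
  ultimately have "card (M (k - 1) \<inter> M 0) < card (M 0)" "finite (M 0)"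
    by (auto intro: card_ge_0_finite)
  \<comment> \<open>starting with a color outside the list of the last vertex closes the cycle\<close>
  then obtain a where a: "a \<in> M 0" "a \<notin> M (k - 1)"
    using card_less_imp_ex_notin[of "M (k - 1) \<inter> M 0" "M 0"] by blast
  obtain f where f: "f 0 = a" "\<forall>j\<le>k - 1. f j \<in> M j" "\<forall>j<k - 1. f (Suc j) \<noteq> f j"
    using ex_path_coloring[of a M "k - 1"] a(1) assms(1) by fastforce
  have "f i \<in> M i \<and> f i \<noteq> f (Suc i mod k)" if "i < k" for i
  proof (cases "Suc i < k")
    case True
    then have "i < k - 1" by linarith
    then have "f (Suc i) \<noteq> f i" using f(3) by simp
    then show ?thesis using f(2) True that by auto
  next
    case False
    then have "Suc i = k" using that by simp
    then have "i = k - 1" "Suc i mod k = 0" by auto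
    then show ?thesis using f a by auto
  qed
  then show ?thesis by blast
qed

definition cycle_edges :: "(nat \<Rightarrow> 'a) \<Rightarrow> nat \<Rightarrow> 'a set set" where
  "cycle_edges c k = {{c i, c (Suc i mod k)} | i. i < k}"

lemma adjacent_cycle_edges_mem:
  assumes "adjacent (cycle_edges c k) x y"
  shows "x \<in> c ` {..<k}"
proof -
  obtain i where i: "i < k" "{x, y} = {c i, c (Suc i mod k)}"
    using assms unfolding adjacent_def cycle_edges_def by blast
  then have "x \<in> {c i, c (Suc i mod k)}" by blast
  moreover have "Suc i mod k < k" using i(1) by simp
  ultimately show ?thesis using i(1) by blast
qed

lemma cycle_kd_choosable_2_1:
  assumes "inj_on c {..<k}"
  shows "kd_choosable 2 1 (c ` {..<k}) (cycle_edges c k) TYPE('c)"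
  unfolding kd_choosable_def cycle_edges_def
proof (intro allI impI)
  let ?C = "{{c i, c (Suc i mod k)} | i. i < k}"
  fix L :: "'a \<Rightarrow> 'c set"
  assume L: "kd_list_assignment 2 1 (c ` {..<k}) ?C L"
  have "\<exists>f. \<forall>i<k. f i \<in> L (c i) \<and> f i \<noteq> f (Suc i mod k)"
  proof (rule ex_cycle_coloring)
    fix i assume "i < k"
    moreover have "Suc i mod k < k" using \<open>i < k\<close> by simp
    moreover have "adjacent ?C (c i) (c (Suc i mod k))"
      using \<open>i < k\<close> by (auto simp: adjacent_def)
    ultimately show "2 \<le> card (L (c i))" "card (L (c i) \<inter> L (c (Suc i mod k))) \<le> 1"
      using L by (auto simp: kd_list_assignment_def)
  qed
  then obtain f where f: "\<forall>i<k. f i \<in> L (c i) \<and> f i \<noteq> f (Suc i mod k)" ..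
  define \<psi> where "\<psi> x = f (the_inv_into {..<k} c x)" for x
  have \<psi>_c: "\<psi> (c i) = f i" if "i < k" for i
    using assms that by (simp add: \<psi>_def the_inv_into_f_f)
  have "proper_L_coloring (c ` {..<k}) ?C L \<psi>"
    unfolding proper_L_coloring_def
  proof (intro conjI ballI impI)
    fix v assume "v \<in> c ` {..<k}"
    then show "\<psi> v \<in> L v" using f \<psi>_c by auto
  next
    fix x y assume "adjacent ?C x y"
    then obtain i where "i < k" "{x, y} = {c i, c (Suc i mod k)}" by (auto simp: adjacent_def)
    moreover have "Suc i mod k < k" using \<open>i < k\<close> by simp
    ultimately show "\<psi> x \<noteq> \<psi> y" using f \<psi>_c by (auto simp: doubleton_eq_iff)
  qed
  then show "\<exists>\<psi>. proper_L_coloring (c ` {..<k}) ?C L \<psi>" by blast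
qed

lemma is_tree_forest: "is_tree V T \<Longrightarrow> forest T"
  by (simp add: is_tree_def forest_def)

lemma degree_one_adjacent_unique:
  assumes "degree T v = 1" "adjacent T v u" "adjacent T v u'"
  shows "u = u'"
proof -
  obtain e where "{e\<in>T. v \<in> e} = {e}"
    using assms(1) unfolding degree_def by (rule card_1_singletonE)
  moreover have "{v, u} \<in> {e\<in>T. v \<in> e}" "{v, u'} \<in> {e\<in>T. v \<in> e}"
    using assms(2,3) by (auto simp: adjacent_def)
  ultimately have "{v, u} = {v, u'}" by simp
  then show ?thesis by (auto simp: doubleton_eq_iff)
qed

lemma degree_one_card_neighbors_le_1:
  assumes "degree T v = 1" "finite A"
  shows "card {u\<in>A. adjacent T v u} \<le> 1"
  using assms degree_one_adjacent_unique[OF assms(1)] by (simp add: card_le_Suc0_iff_eq)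

lemma tree_leaves_not_adjacent:
  assumes T: "is_tree V T" "3 \<le> card V" and xy: "x \<in> leaves V T" "y \<in> leaves V T"
  shows "\<not> adjacent T x y"
proof
  assume "adjacent T x y"
  \<comment> \<open>both ends being leaves, no edge leaves {x, y}, so the tree is just this edge\<close>
  have deg: "degree T x = 1" "degree T y = 1" using xy by (auto simp: leaves_def)
  have closed: "z \<in> {x, y}" if "w \<in> {x, y}" "adjacent T w z" for w z
  proof (cases "w = x")
    case True
    then show ?thesis using degree_one_adjacent_unique[OF deg(1) \<open>adjacent T x y\<close>] that(2) by simp
  next
    case False
    then have "w = y" using that(1) by simp
    then show ?thesis
      using degree_one_adjacent_unique[OF deg(2) adjacent_sym[OF \<open>adjacent T x y\<close>]] that(2) by simp
  qed
  have "V \<subseteq> {x, y}"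
  proof
    fix v assume "v \<in> V"
    moreover have "x \<in> V" using xy(1) by (simp add: leaves_def)
    ultimately have "reach T x v" using T(1) by (simp add: is_tree_def)
    from reach_closed[OF this _ closed] show "v \<in> {x, y}" by simp
  qed
  then have "card V \<le> card {x, y}" by (simp add: card_mono)
  also have "\<dots> \<le> 2" by (simp add: card_insert_le_m1)
  finally show False using T(2) by simp
qed

lemma tree_leaf_cycle_adjacent_inner:
  assumes "c ` {..<k} \<subseteq> leaves V T" "u \<notin> leaves V T" "adjacent (T \<union> cycle_edges c k) u v"
  shows "adjacent T u v"
  using assms adjacent_cycle_edges_mem[of c k u v] by (auto simp: adjacent_def)

lemma tree_leaf_cycle_adjacent_leaves:
  assumes "is_tree V T" "3 \<le> card V" "x \<in> leaves V T" "y \<in> leaves V T"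
  shows "adjacent (T \<union> cycle_edges c k) x y \<longleftrightarrow> adjacent (cycle_edges c k) x y"
  using tree_leaves_not_adjacent[OF assms] by (auto simp: adjacent_def)

lemma tree_leaf_cycle_kd_choosable_3_1:
  assumes T: "is_tree V T" "3 \<le> card V" and c: "bij_betw c {..<k} (leaves V T)"
  shows "kd_choosable 3 1 V (T \<union> cycle_edges c k) TYPE('c)"
proof -
  define E where "E = T \<union> cycle_edges c k"
  define I where "I = V - leaves V T"
  have leaves: "V - I = leaves V T" "c ` {..<k} = leaves V T"
    using c by (auto simp: I_def leaves_def bij_betw_def)
  have inner: "adjacent T u v" if "u \<in> I" "adjacent E u v" for u v
    using that leaves(2) by (intro tree_leaf_cycle_adjacent_inner[of c k V T]) (auto simp: I_def E_def)
  have "finite I" using T(1) by (simp add: I_def is_tree_def simple_graph_def)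
  have "degenerate 1 I E"
    using forest_degenerate[OF is_tree_forest[OF T(1)] \<open>finite I\<close>] \<open>finite I\<close> inner
    by (rule degenerate_mono)
  moreover have "\<forall>v\<in>I. \<not> adjacent E v v"
    using inner forest_not_adjacent_self[OF is_tree_forest[OF T(1)]] by blast
  moreover have "kd_choosable 2 1 (V - I) E TYPE('c)"
  proof -
    have "adjacent E x y \<longleftrightarrow> adjacent (cycle_edges c k) x y" if "x \<in> V - I" "y \<in> V - I" for x y
      using tree_leaf_cycle_adjacent_leaves[OF T] that leaves(1) by (simp add: E_def)
    moreover have "kd_choosable 2 1 (V - I) (cycle_edges c k) TYPE('c)"
      using cycle_kd_choosable_2_1[of c k] c leaves by (simp add: bij_betw_def)
    ultimately show ?thesis using kd_choosable_cong by blast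
  qed
  moreover have "card {u\<in>I. adjacent E x u} \<le> 1" if "x \<in> V - I" for x
  proof -
    have "{u\<in>I. adjacent E x u} \<subseteq> {u\<in>I. adjacent T x u}"
    proof
      fix u assume "u \<in> {u\<in>I. adjacent E x u}"
      then show "u \<in> {u\<in>I. adjacent T x u}"
        using adjacent_sym[OF inner[of u x]] adjacent_sym[of E x u] by simp
    qed
    moreover have "card {u\<in>I. adjacent T x u} \<le> 1"
      using that \<open>finite I\<close> by (intro degree_one_card_neighbors_le_1) (auto simp: I_def leaves_def)
    ultimately show ?thesis
      using card_mono[of "{u\<in>I. adjacent T x u}" "{u\<in>I. adjacent E x u}"] \<open>finite I\<close> by simp
  qed
  ultimately show ?thesis
    using kd_choosable_extend_degenerate[of I V 1 E 2 1 1] \<open>finite I\<close>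
    by (simp add: I_def E_def)
qed

theorem proposition2:
  fixes V :: "'a set" and E :: "'a set set"
  assumes "halin_graph V E"
  shows "kd_choosable 3 1 V E TYPE('c)"
proof -
  obtain T c k where "is_tree V T" "4 \<le> card V"
    and "bij_betw c {..<k} (leaves V T)" and "E = T \<union> cycle_edges c k"
    using assms unfolding halin_graph_def cycle_edges_def by blast
  then show ?thesis using tree_leaf_cycle_kd_choosable_3_1[of V T c k] by simp
qed

end
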